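(* Let $t,k,d,m,\ell$ be positive integers with $m\ge d$, and let $\mathbb{F}$ be a finite field. If $\Pi$ is a $t$-private $k$-server linear HSS for $\mathsf{POLY}_{d,m}(\mathbb{F})^\ell$, then $dt<k$ and the download cost of $\Pi$ is at least $k\ell\log_2|\mathbb{F}|/(k-dt)$. Consequently the download rate of $\Pi$ is at most $1-dt/k$.
   Context: $\mathsf{POLY}_{d,m}(\mathbb{F})$: polynomials in $\mathbb{F}[X_1,\dots,X_m]$ of total degree at most $d$. $\mathcal{F}^\ell$: the class of maps $(x_{i,r})_{i\in[m],r\in[\ell]}\mapsto(f_1(\mathbf{x}_1),\dots,f_\ell(\mathbf{x}_\ell))$, $\mathbf{x}_r=(x_{1,r},\dots,x_{m,r})$, $f_r\in\mathcal{F}$, where all $\ell m$ inputs are shared independently. A $k$-server HSS $(\mathsf{Share},\mathsf{Eval},\mathsf{Rec})$: randomized $\mathsf{Share}$ splits each input into $k$ input shares; server $j$ computes $y^{(j)}=\mathsf{Eval}(f,j,\text{its input shares})$; $\mathsf{Rec}(y^{(1)},\dots,y^{(k)})$ equals the function value with probability 1; $t$-private if for every set of at most $t$ servers the distribution of their input shares does not depend on the input. Linear HSS: $\mathcal{X}=\mathbb{F}$, $\mathsf{Share}(x,\mathbf{r})$ is $\mathbb{F}$-linear in $x$ and a uniformly random vector $\mathbf{r}$ over $\mathbb{F}$, $y^{(j)}\in\mathbb{F}^{b_j}$, and $\mathsf{Rec}$ is $\mathbb{F}$-linear ($\mathsf{Eval}$ arbitrary). Download cost $=\sum_j b_j\log_2|\mathbb{F}|$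 bits; download rate $=\ell\log_2|\mathbb{F}|/$download cost. *)

theory Defs
  imports Complex_Main "HOL-Library.Cardinality"
begin

definition monoms :: "nat \<Rightarrow> nat \<Rightarrow> (nat \<Rightarrow> nat) set" where
  "monoms m d = {\<alpha>. (\<forall>i\<ge>m. \<alpha> i = 0) \<and> (\<Sum>i<m. \<alpha> i) \<le> d}"

(* POLY_{d,m}(F): polynomials given by their coefficient functions, supported on monoms m d *)
definition POLY :: "nat \<Rightarrow> nat \<Rightarrow> ((nat \<Rightarrow> nat) \<Rightarrow> 'a::field) set" where
  "POLY d m = {c. \<forall>\<alpha>. \<alpha> \<notin> monoms m d \<longrightarrow> c \<alpha> = 0}"

definition peval :: "nat \<Rightarrow> nat \<Rightarrow> ((nat \<Rightarrow> nat) \<Rightarrow> 'a::field) \<Rightarrow> (nat \<Rightarrow> 'a) \<Rightarrow> 'a" where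
  "peval d m c x = (\<Sum>\<alpha>\<in>monoms m d. c \<alpha> * (\<Prod>i<m. x i ^ \<alpha> i))"

(* Linear sharing: the share of server j of input x with randomness r \<in> F^\<rho> is the
   vector in F^{sd j} (coordinates u < sd j) given by an F-linear map of (x, r). *)
definition share :: "nat \<Rightarrow> (nat \<Rightarrow> nat) \<Rightarrow> (nat \<Rightarrow> nat \<Rightarrow> 'a::field) \<Rightarrow>
    (nat \<Rightarrow> nat \<Rightarrow> nat \<Rightarrow> 'a) \<Rightarrow> nat \<Rightarrow> 'a \<Rightarrow> (nat \<Rightarrow> 'a) \<Rightarrow> (nat \<Rightarrow> 'a)" where
  "share \<rho> sd A B j x r =
     (\<lambda>u. if u < sd j then x * A j u + (\<Sum>q<\<rho>. r q * B j q u) else 0)"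

(* randomness for all inputs x_{i,s} (i < m, s < l): independent vectors in F^\<rho> *)
definition rand_space :: "nat \<Rightarrow> nat \<Rightarrow> nat \<Rightarrow> (nat \<Rightarrow> nat \<Rightarrow> nat \<Rightarrow> 'a::zero) set" where
  "rand_space m l \<rho> = {R. \<forall>i s q. \<not> (i < m \<and> s < l \<and> q < \<rho>) \<longrightarrow> R i s q = 0}"

definition view :: "nat \<Rightarrow> (nat \<Rightarrow> nat) \<Rightarrow> (nat \<Rightarrow> nat \<Rightarrow> 'a::field) \<Rightarrow>
    (nat \<Rightarrow> nat \<Rightarrow> nat \<Rightarrow> 'a) \<Rightarrow> nat \<Rightarrow> nat \<Rightarrow> nat \<Rightarrow> (nat \<Rightarrow> nat \<Rightarrow> 'a)
    \<Rightarrow> (nat \<Rightarrow> nat \<Rightarrow> nat \<Rightarrow> 'a) \<Rightarrow> nat \<Rightarrow> nat \<Rightarrow> (nat \<Rightarrow> 'a)" where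
  "view \<rho> sd A B m l j X R =
     (\<lambda>i s. if i < m \<and> s < l then share \<rho> sd A B j (X i s) (R i s) else (\<lambda>_. 0))"

(* A k-server linear HSS for POLY_{d,m}(F)^l:
   sharing given by (\<rho>, sd, A, B); Eval = ev (arbitrary), server j outputs a vector in F^{b j};
   Rec is the F-linear map  y \<mapsto> (\<Sum>j<k. \<Sum>u<b j. L s j u * y_j u)_{s<l}. *)
definition linear_HSS_POLY ::
  "nat \<Rightarrow> nat \<Rightarrow> nat \<Rightarrow> nat \<Rightarrow> nat \<Rightarrow> (nat \<Rightarrow> nat) \<Rightarrow> (nat \<Rightarrow> nat \<Rightarrow> 'a::field) \<Rightarrow>
   (nat \<Rightarrow> nat \<Rightarrow> nat \<Rightarrow> 'a) \<Rightarrow> (nat \<Rightarrow> nat) \<Rightarrow>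
   ((nat \<Rightarrow> (nat \<Rightarrow> nat) \<Rightarrow> 'a) \<Rightarrow> nat \<Rightarrow> (nat \<Rightarrow> nat \<Rightarrow> nat \<Rightarrow> 'a) \<Rightarrow> (nat \<Rightarrow> 'a)) \<Rightarrow>
   (nat \<Rightarrow> nat \<Rightarrow> nat \<Rightarrow> 'a) \<Rightarrow> bool" where
  "linear_HSS_POLY k d m l \<rho> sd A B b ev L \<longleftrightarrow>
     (\<forall>fs X R. (\<forall>s<l. fs s \<in> POLY d m) \<longrightarrow> R \<in> rand_space m l \<rho> \<longrightarrow>
        (\<forall>s<l. (\<Sum>j<k. \<Sum>u<b j. L s j u * ev fs j (view \<rho> sd A B m l j X R) u)
               = peval d m (fs s) (\<lambda>i. X i s)))"

(* t-privacy: for every set T of at most t servers, the joint distribution of their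
   input shares (randomness uniform on rand_space) does not depend on the inputs X. *)
definition HSS_private ::
  "nat \<Rightarrow> nat \<Rightarrow> nat \<Rightarrow> nat \<Rightarrow> nat \<Rightarrow> (nat \<Rightarrow> nat) \<Rightarrow> (nat \<Rightarrow> nat \<Rightarrow> 'a::field) \<Rightarrow>
   (nat \<Rightarrow> nat \<Rightarrow> nat \<Rightarrow> 'a) \<Rightarrow> bool" where
  "HSS_private t k m l \<rho> sd A B \<longleftrightarrow>
     (\<forall>T X X' W. T \<subseteq> {..<k} \<longrightarrow> card T \<le> t \<longrightarrow>
        card {R \<in> rand_space m l \<rho>. \<forall>j\<in>T. view \<rho> sd A B m l j X R = W j}
      = card {R \<in> rand_space m l \<rho>. \<forall>j\<in>T. view \<rho> sd A B m l j X' R = W j})"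

definition download_cost :: "'a::finite itself \<Rightarrow> nat \<Rightarrow> (nat \<Rightarrow> nat) \<Rightarrow> real" where
  "download_cost (_::'a itself) k b = real (\<Sum>j<k. b j) * log 2 (real CARD('a))"

definition download_rate :: "'a::finite itself \<Rightarrow> nat \<Rightarrow> nat \<Rightarrow> (nat \<Rightarrow> nat) \<Rightarrow> real" where
  "download_rate (T::'a itself) l k b = real l * log 2 (real CARD('a)) / download_cost T k b"

end

theory Submission
  imports Defs "HOL-Library.FuncSet" "HOL-Number_Theory.Cong"
begin

text \<open>
  Choose d groups T_0, ..., T_(d-1) of at most t servers each. By t-privacy, for every i
  there is randomness under which the shares of the input x_i = 1 look to T_i exactly like
  those of x_i = 0 with zero randomness. Run the scheme on the polynomials
  v_s * x_0 * ... * x_(d-1) at the 2^d indicator inputs x = 1_S, S \<subseteq> {0..<d}, and take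
  the alternating sum over S: reconstruction returns v_s, while the outputs of a server in
  T_i do not depend on whether i \<in> S, so their alternating sums vanish. Hence every
  v \<in> F^l is a function of the outputs of the remaining k - dt servers, which therefore
  have at least l field elements in total. Averaging over the k cyclic shifts of the
  groups gives k l \<le> (k - dt) (b_0 + ... + b_(k-1)).
\<close>

lemma finite_rand_space: "finite (rand_space m l \<rho> :: (nat \<Rightarrow> nat \<Rightarrow> nat \<Rightarrow> 'a::{finite,zero}) set)"
proof -
  define F1 :: "(nat \<Rightarrow> 'a) set"
    where "F1 = {h. \<forall>q. (q \<in> {..<\<rho>} \<longrightarrow> h q \<in> UNIV) \<and> (q \<notin> {..<\<rho>} \<longrightarrow> h q = 0)}"
  define F2 where "F2 = {g. \<forall>s. (s \<in> {..<l} \<longrightarrow> g s \<in> F1) \<and> (s \<notin> {..<l} \<longrightarrow> g s = (\<lambda>_. 0))}"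
  define F3 where "F3 = {R. \<forall>i. (i \<in> {..<m} \<longrightarrow> R i \<in> F2) \<and> (i \<notin> {..<m} \<longrightarrow> R i = (\<lambda>_ _. 0))}"
  have "finite F1" "finite F2" "finite F3"
    unfolding F1_def F2_def F3_def by (intro finite_set_of_finite_funs; simp)+
  moreover have "rand_space m l \<rho> \<subseteq> F3"
    by (auto simp: rand_space_def F1_def F2_def F3_def fun_eq_iff)
  ultimately show ?thesis by (blast intro: finite_subset)
qed

lemma finite_monoms: "finite (monoms m d)"
proof (rule finite_subset)
  show "monoms m d \<subseteq> {\<alpha>. \<forall>i. (i \<in> {..<m} \<longrightarrow> \<alpha> i \<in> {..d}) \<and> (i \<notin> {..<m} \<longrightarrow> \<alpha> i = 0)}"
    unfolding monoms_def by (auto intro: order_trans[OF member_le_sum])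
qed (intro finite_set_of_finite_funs; simp)

definition prod_vars_exponent :: "nat \<Rightarrow> nat \<Rightarrow> nat" where
  "prod_vars_exponent d = (\<lambda>i. if i < d then 1 else 0)"

definition prod_vars_poly :: "nat \<Rightarrow> 'a \<Rightarrow> (nat \<Rightarrow> nat) \<Rightarrow> 'a::zero" where
  "prod_vars_poly d c = (\<lambda>\<alpha>. if \<alpha> = prod_vars_exponent d then c else 0)"

lemma prod_vars_exponent_in_monoms:
  assumes "d \<le> m"
  shows "prod_vars_exponent d \<in> monoms m d"
proof -
  have "(\<Sum>i<m. prod_vars_exponent d i) = (\<Sum>i<d. prod_vars_exponent d i)"
    using assms by (intro sum.mono_neutral_right) (auto simp: prod_vars_exponent_def)
  then show ?thesis using assms by (simp add: monoms_def prod_vars_exponent_def)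
qed

lemma prod_vars_poly_in_POLY: "d \<le> m \<Longrightarrow> prod_vars_poly d c \<in> POLY d m"
  using prod_vars_exponent_in_monoms by (auto simp: POLY_def prod_vars_poly_def)

lemma peval_monomial:
  assumes "\<beta> \<in> monoms m d"
  shows "peval d m (\<lambda>\<alpha>. if \<alpha> = \<beta> then c else 0) x = c * (\<Prod>i<m. x i ^ \<beta> i)"
proof -
  have "peval d m (\<lambda>\<alpha>. if \<alpha> = \<beta> then c else 0) x
      = (\<Sum>\<alpha>\<in>monoms m d. if \<alpha> = \<beta> then c * (\<Prod>i<m. x i ^ \<alpha> i) else 0)"
    unfolding peval_def by (intro sum.cong) auto
  then show ?thesis using assms finite_monoms by (simp add: sum.delta')
qed

lemma peval_prod_vars_poly_indicator:
  assumes "d \<le> m"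
  shows "peval d m (prod_vars_poly d c) (\<lambda>i. if i \<in> S then 1 else 0)
       = (if {..<d} \<subseteq> S then c else (0::'a::field))"
proof -
  let ?x = "\<lambda>i. if i \<in> S then 1 else (0::'a)"
  have "(\<Prod>i<m. ?x i ^ prod_vars_exponent d i) = (\<Prod>i<d. ?x i ^ prod_vars_exponent d i)"
    using assms by (intro prod.mono_neutral_right) (auto simp: prod_vars_exponent_def)
  also have "\<dots> = (\<Prod>i<d. ?x i)"
    by (intro prod.cong) (auto simp: prod_vars_exponent_def)
  also have "\<dots> = (if {..<d} \<subseteq> S then 1 else 0)"
    by (auto simp: prod_zero_iff subset_iff intro!: prod.neutral)
  finally show ?thesis
    by (simp add: prod_vars_poly_def peval_monomial[OF prod_vars_exponent_in_monoms[OF assms]])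
qed

text \<open>The mixed finite difference of f over all subsets of D, in every direction of D.\<close>

definition alt_subset_sum :: "'i set \<Rightarrow> ('i set \<Rightarrow> 'a::comm_ring_1) \<Rightarrow> 'a" where
  "alt_subset_sum D f = (\<Sum>S\<in>Pow D. (-1) ^ (card D - card S) * f S)"

lemma alt_subset_sum_sum:
  "alt_subset_sum D (\<lambda>S. \<Sum>x\<in>X. g x S) = (\<Sum>x\<in>X. alt_subset_sum D (g x))"
  unfolding alt_subset_sum_def sum_distrib_left by (rule sum.swap)

lemma alt_subset_sum_mult: "alt_subset_sum D (\<lambda>S. c * g S) = c * alt_subset_sum D g"
  unfolding alt_subset_sum_def by (simp add: sum_distrib_left mult.left_commute)

lemma alt_subset_sum_top:
  assumes "finite D"
  shows "alt_subset_sum D (\<lambda>S. if D \<subseteq> S then c else 0) = c"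
proof -
  have "alt_subset_sum D (\<lambda>S. if D \<subseteq> S then c else 0) = (\<Sum>S\<in>Pow D. if S = D then c else 0)"
    unfolding alt_subset_sum_def by (intro sum.cong) auto
  also have "\<dots> = c" using assms by (simp add: sum.delta)
  finally show ?thesis .
qed

lemma alt_subset_sum_insert:
  assumes "finite D" "i \<notin> D"
  shows "alt_subset_sum (insert i D) (f :: 'i set \<Rightarrow> 'a::comm_ring_1)
       = alt_subset_sum D (\<lambda>S. f (insert i S)) - alt_subset_sum D f"
proof -
  have sign_insert: "(-1::'a) ^ (card (insert i D) - card (insert i S)) = (-1) ^ (card D - card S)"
    and sign: "(-1::'a) ^ (card (insert i D) - card S) = - ((-1) ^ (card D - card S))"
    if "S \<in> Pow D" for S
  proof -
    have S: "finite S" "i \<notin> S" "card S \<le> card D"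
      using that assms by (auto intro: finite_subset card_mono)
    then show "(-1::'a) ^ (card (insert i D) - card (insert i S)) = (-1) ^ (card D - card S)"
      using assms by simp
    have "card (insert i D) - card S = Suc (card D - card S)" using S assms by simp
    then show "(-1::'a) ^ (card (insert i D) - card S) = - ((-1) ^ (card D - card S))" by simp
  qed
  have inj: "inj_on (insert i) (Pow D)"
    using assms by (intro inj_onI) (metis Diff_insert_absorb PowD subsetD)
  have "alt_subset_sum (insert i D) f
      = (\<Sum>S\<in>Pow D. (-1) ^ (card (insert i D) - card S) * f S)
        + (\<Sum>S\<in>insert i ` Pow D. (-1) ^ (card (insert i D) - card S) * f S)"
    unfolding alt_subset_sum_def Pow_insert using assms by (intro sum.union_disjoint) auto
  also have "\<dots> = - alt_subset_sum D f + alt_subset_sum D (\<lambda>S. f (insert i S))"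
    unfolding alt_subset_sum_def sum_negf[symmetric] using inj
    by (simp add: sum.reindex, intro arg_cong2[where f = "(+)"] sum.cong) (simp_all add: sign sign_insert)
  finally show ?thesis by simp
qed

lemma alt_subset_sum_eq_0:
  assumes "finite D" "i \<in> D" and indep: "\<And>S. f S = f (S - {i})"
  shows "alt_subset_sum D f = 0"
proof -
  have "f (insert i S) = f S" if "S \<in> Pow (D - {i})" for S
    using indep[of "insert i S"] indep[of S] that by (simp add: Diff_insert_absorb)
  then have "alt_subset_sum (D - {i}) (\<lambda>S. f (insert i S)) = alt_subset_sum (D - {i}) f"
    unfolding alt_subset_sum_def by (intro sum.cong) auto
  moreover have "D = insert i (D - {i})" using assms by auto
  ultimately show ?thesis
    using alt_subset_sum_insert[of "D - {i}" i f] assms by simp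
qed

lemma le_card_of_onto_PiE:
  fixes \<phi> :: "('i \<Rightarrow> 'a::{finite,zero_neq_one}) \<Rightarrow> nat \<Rightarrow> 'a"
  assumes "finite I" and onto: "\<And>v. \<exists>y\<in>I \<rightarrow>\<^sub>E UNIV. \<forall>s<l. \<phi> y s = v s"
  shows "l \<le> card I"
proof -
  let ?F = "\<lambda>y. restrict (\<phi> y) {..<l}"
  have "{..<l} \<rightarrow>\<^sub>E UNIV \<subseteq> ?F ` (I \<rightarrow>\<^sub>E UNIV)"
  proof
    fix v :: "nat \<Rightarrow> 'a" assume v: "v \<in> {..<l} \<rightarrow>\<^sub>E UNIV"
    obtain y where y: "y \<in> I \<rightarrow>\<^sub>E UNIV" "\<forall>s<l. \<phi> y s = v s" using onto by blast
    have "?F y = v"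
    proof
      fix s show "?F y s = v s"
        using y(2) PiE_arb[OF v, of s] by (cases "s < l") simp_all
    qed
    with y(1) show "v \<in> ?F ` (I \<rightarrow>\<^sub>E UNIV)" by blast
  qed
  then have "card ({..<l} \<rightarrow>\<^sub>E (UNIV :: 'a set)) \<le> card (?F ` (I \<rightarrow>\<^sub>E UNIV))"
    by (intro card_mono finite_imageI finite_PiE \<open>finite I\<close>) simp_all
  also have "\<dots> \<le> card (I \<rightarrow>\<^sub>E (UNIV :: 'a set))"
    by (intro card_image_le finite_PiE \<open>finite I\<close>) simp
  finally have "CARD('a) ^ l \<le> CARD('a) ^ card I"
    using \<open>finite I\<close> by (simp add: card_PiE)
  moreover have "1 < CARD('a)"
    using card_mono[of UNIV "{0::'a, 1}"] by simp
  ultimately show ?thesis by (rule power_le_imp_le_exp[rotated])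
qed

lemma private_share_of_one_vanishes:
  fixes A :: "nat \<Rightarrow> nat \<Rightarrow> 'a::{finite,field}"
  assumes "HSS_private t k m l \<rho> sd A B" "T \<subseteq> {..<k}" "card T \<le> t"
  obtains R where "R \<in> rand_space m l \<rho>"
    and "\<And>j i s. j \<in> T \<Longrightarrow> i < m \<Longrightarrow> s < l \<Longrightarrow> share \<rho> sd A B j 1 (R i s) = (\<lambda>_. 0)"
proof -
  define zero_view where "zero_view X = {R \<in> rand_space m l \<rho>.
      \<forall>j\<in>T. view \<rho> sd A B m l j X R = (\<lambda>_ _ _. 0)}" for X
  have "card (zero_view (\<lambda>_ _. 0)) = card (zero_view (\<lambda>_ _. 1))"
    using assms(1)[unfolded HSS_private_def, rule_format, OF assms(2,3),
        where X = "\<lambda>_ _. 0" and X' = "\<lambda>_ _. 1" and W = "\<lambda>_ _ _ _. 0"]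
    unfolding zero_view_def by simp
  moreover have "(\<lambda>_ _ _. 0) \<in> zero_view (\<lambda>_ _. 0)"
    by (auto simp: zero_view_def rand_space_def view_def share_def fun_eq_iff)
  moreover have "finite (zero_view X)" for X
    unfolding zero_view_def by (rule finite_subset[OF _ finite_rand_space]) auto
  ultimately have "zero_view (\<lambda>_ _. 1) \<noteq> {}"
    by (metis card.empty card_0_eq empty_iff)
  then obtain R where "R \<in> zero_view (\<lambda>_ _. 1)" by blast
  then show thesis
  proof (intro that[of R])
    fix j i s assume "j \<in> T" "i < m" "s < l"
    then have "view \<rho> sd A B m l j (\<lambda>_ _. 1) R i s = (\<lambda>_. 0)"
      using \<open>R \<in> zero_view (\<lambda>_ _. 1)\<close> unfolding zero_view_def by auto
    then show "share \<rho> sd A B j 1 (R i s) = (\<lambda>_. 0)"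
      using \<open>i < m\<close> \<open>s < l\<close> by (simp add: view_def)
  qed (use \<open>R \<in> zero_view (\<lambda>_ _. 1)\<close> zero_view_def in auto)
qed


lemma private_hiding_randomness:
  fixes A :: "nat \<Rightarrow> nat \<Rightarrow> 'a::{finite,field}"
  assumes priv: "HSS_private t k m l \<rho> sd A B" and "d \<le> m"
    and T: "\<And>i. i < d \<Longrightarrow> T i \<subseteq> {..<k} \<and> card (T i) \<le> t"
  obtains Rf where "\<And>i. i < d \<Longrightarrow> Rf i \<in> rand_space m l \<rho>"
    and "\<And>i j s. i < d \<Longrightarrow> j \<in> T i \<Longrightarrow> s < l \<Longrightarrow> share \<rho> sd A B j 1 (Rf i i s) = (\<lambda>_. 0)"
proof -
  have "\<forall>i\<in>{..<d}. \<exists>R. R \<in> rand_space m l \<rho> \<and>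
      (\<forall>j\<in>T i. \<forall>s<l. share \<rho> sd A B j 1 (R i s) = (\<lambda>_. 0))"
  proof
    fix i assume "i \<in> {..<d}"
    with T \<open>d \<le> m\<close> show "\<exists>R. R \<in> rand_space m l \<rho> \<and>
        (\<forall>j\<in>T i. \<forall>s<l. share \<rho> sd A B j 1 (R i s) = (\<lambda>_. 0))"
      by (metis lessThan_iff order_less_le_trans private_share_of_one_vanishes[OF priv])
  qed
  then show thesis
    using that by (metis bchoice lessThan_iff)
qed

text \<open>
  The hybrid inputs: variable i is set to 1 for \<open>i \<in> S\<close>, and is then shared with the
  randomness \<open>Rf i\<close> that hides it from the i-th group of servers.
\<close>

definition hybrid_input :: "nat set \<Rightarrow> nat \<Rightarrow> nat \<Rightarrow> 'a::zero_neq_one" where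
  "hybrid_input S = (\<lambda>i s. if i \<in> S then 1 else 0)"

definition hybrid_rand ::
  "nat \<Rightarrow> (nat \<Rightarrow> nat \<Rightarrow> nat \<Rightarrow> nat \<Rightarrow> 'a) \<Rightarrow> nat set \<Rightarrow> nat \<Rightarrow> nat \<Rightarrow> nat \<Rightarrow> 'a::zero" where
  "hybrid_rand d Rf S = (\<lambda>i. if i \<in> S \<and> i < d then Rf i i else (\<lambda>_ _. 0))"

lemma hybrid_rand_in_rand_space:
  "(\<And>i. i < d \<Longrightarrow> Rf i \<in> rand_space m l \<rho>) \<Longrightarrow> hybrid_rand d Rf S \<in> rand_space m l \<rho>"
  by (auto simp: hybrid_rand_def rand_space_def)

lemma view_hybrid_Diff:
  assumes "i\<^sub>0 < d" and "\<And>s. s < l \<Longrightarrow> share \<rho> sd A B j 1 (Rf i\<^sub>0 i\<^sub>0 s) = (\<lambda>_. 0)"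
  shows "view \<rho> sd A B m l j (hybrid_input S) (hybrid_rand d Rf S)
       = view \<rho> sd A B m l j (hybrid_input (S - {i\<^sub>0})) (hybrid_rand d Rf (S - {i\<^sub>0}))"
proof (intro ext)
  fix i s u
  have "share \<rho> sd A B j 0 (\<lambda>_. 0) = (\<lambda>_. 0)" by (simp add: share_def fun_eq_iff)
  then show "view \<rho> sd A B m l j (hybrid_input S) (hybrid_rand d Rf S) i s u
           = view \<rho> sd A B m l j (hybrid_input (S - {i\<^sub>0})) (hybrid_rand d Rf (S - {i\<^sub>0})) i s u"
    using assms by (cases "i = i\<^sub>0") (auto simp: view_def hybrid_input_def hybrid_rand_def)
qed

lemma alt_subset_sum_hybrid_outputs:
  fixes A :: "nat \<Rightarrow> nat \<Rightarrow> 'a::field"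
    and L :: "nat \<Rightarrow> nat \<Rightarrow> nat \<Rightarrow> 'a" and v :: "nat \<Rightarrow> 'a"
  assumes hss: "linear_HSS_POLY k d m l \<rho> sd A B b ev L" and "d \<le> m"
    and Rf_rand: "\<And>i. i < d \<Longrightarrow> Rf i \<in> rand_space m l \<rho>"
    and Rf_hides: "\<And>i j s. i < d \<Longrightarrow> j \<in> T i \<Longrightarrow> s < l \<Longrightarrow> share \<rho> sd A B j 1 (Rf i i s) = (\<lambda>_. 0)"
    and G: "G \<subseteq> {..<k}" and cover: "\<And>j. j < k \<Longrightarrow> j \<notin> G \<Longrightarrow> \<exists>i<d. j \<in> T i"
    and "s < l"
  defines "Y \<equiv> \<lambda>S j. ev (\<lambda>s. prod_vars_poly d (v s)) j
      (view \<rho> sd A B m l j (hybrid_input S) (hybrid_rand d Rf S))"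
  shows "(\<Sum>j\<in>G. \<Sum>u<b j. L s j u * alt_subset_sum {..<d} (\<lambda>S. Y S j u)) = v s"
proof -
  have vanish: "alt_subset_sum {..<d} (\<lambda>S. Y S j u) = 0" if "j < k" "j \<notin> G" for j u
  proof -
    obtain i where "i < d" "j \<in> T i" using cover \<open>j < k\<close> \<open>j \<notin> G\<close> by blast
    then show ?thesis
      using view_hybrid_Diff[of i d l \<rho> sd A B j Rf] Rf_hides
      by (intro alt_subset_sum_eq_0[of _ i]) (simp_all add: Y_def)
  qed
  have "(\<Sum>j<k. \<Sum>u<b j. L s j u * Y S j u) = peval d m (prod_vars_poly d (v s)) (\<lambda>i. hybrid_input S i s)"
    for S
    using hss[unfolded linear_HSS_POLY_def, rule_format, where X = "hybrid_input S",
        OF prod_vars_poly_in_POLY[OF \<open>d \<le> m\<close>] hybrid_rand_in_rand_space[of d Rf, OF Rf_rand] \<open>s < l\<close>]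
    unfolding Y_def .
  then have rec: "(\<Sum>j<k. \<Sum>u<b j. L s j u * Y S j u) = (if {..<d} \<subseteq> S then v s else 0)" for S
    unfolding hybrid_input_def peval_prod_vars_poly_indicator[OF \<open>d \<le> m\<close>] .
  have "(\<Sum>j\<in>G. \<Sum>u<b j. L s j u * alt_subset_sum {..<d} (\<lambda>S. Y S j u))
      = (\<Sum>j<k. \<Sum>u<b j. L s j u * alt_subset_sum {..<d} (\<lambda>S. Y S j u))"
    using G vanish by (intro sum.mono_neutral_left) simp_all
  also have "\<dots> = alt_subset_sum {..<d} (\<lambda>S. \<Sum>j<k. \<Sum>u<b j. L s j u * Y S j u)"
    by (simp add: alt_subset_sum_sum alt_subset_sum_mult)
  also have "\<dots> = v s"
    unfolding rec by (rule alt_subset_sum_top) simp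
  finally show ?thesis .
qed

lemma output_size_ge_of_cover:
  fixes A :: "nat \<Rightarrow> nat \<Rightarrow> 'a::{finite,field}"
    and L :: "nat \<Rightarrow> nat \<Rightarrow> nat \<Rightarrow> 'a"
    and T :: "nat \<Rightarrow> nat set"
  assumes hss: "linear_HSS_POLY k d m l \<rho> sd A B b ev L"
    and priv: "HSS_private t k m l \<rho> sd A B" and "d \<le> m"
    and T: "\<And>i. i < d \<Longrightarrow> T i \<subseteq> {..<k} \<and> card (T i) \<le> t"
    and G: "G \<subseteq> {..<k}" and cover: "\<And>j. j < k \<Longrightarrow> j \<notin> G \<Longrightarrow> \<exists>i<d. j \<in> T i"
  shows "l \<le> (\<Sum>j\<in>G. b j)"
proof -
  obtain Rf where Rf_rand: "\<And>i. i < d \<Longrightarrow> Rf i \<in> rand_space m l \<rho>"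
    and Rf_hides: "\<And>i j s. i < d \<Longrightarrow> j \<in> T i \<Longrightarrow> s < l \<Longrightarrow> share \<rho> sd A B j 1 (Rf i i s) = (\<lambda>_. 0)"
    using private_hiding_randomness[OF priv \<open>d \<le> m\<close>, where T = T, OF T] by blast
  have "finite G" using G by (rule finite_subset) simp
  define I where "I = (SIGMA j:G. {..<b j})"
  have "finite I" using \<open>finite G\<close> by (simp add: I_def)
  moreover have "\<exists>y\<in>I \<rightarrow>\<^sub>E UNIV. \<forall>s<l. (\<Sum>j\<in>G. \<Sum>u<b j. L s j u * y (j, u)) = v s" for v
  proof
    let ?Y = "\<lambda>S j. ev (\<lambda>s. prod_vars_poly d (v s)) j
        (view \<rho> sd A B m l j (hybrid_input S) (hybrid_rand d Rf S))"
    let ?y = "restrict (\<lambda>(j, u). alt_subset_sum {..<d} (\<lambda>S. ?Y S j u)) I"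
    show "?y \<in> I \<rightarrow>\<^sub>E UNIV" by simp
    have "(\<Sum>j\<in>G. \<Sum>u<b j. L s j u * ?y (j, u))
        = (\<Sum>j\<in>G. \<Sum>u<b j. L s j u * alt_subset_sum {..<d} (\<lambda>S. ?Y S j u))" for s
      by (intro sum.cong refl) (simp add: I_def)
    then show "\<forall>s<l. (\<Sum>j\<in>G. \<Sum>u<b j. L s j u * ?y (j, u)) = v s"
      using alt_subset_sum_hybrid_outputs[OF hss \<open>d \<le> m\<close> Rf_rand Rf_hides G cover] by simp
  qed
  ultimately have "l \<le> card I" by (rule le_card_of_onto_PiE)
  then show ?thesis using \<open>finite G\<close> by (simp add: I_def)
qed

lemma inj_on_add_mod: "inj_on (\<lambda>c. (c + p) mod k) {..<k::nat}"
  by (intro inj_onI) (metis cong_def cong_add_rcancel_nat cong_less_modulus_unique_nat lessThan_iff)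

lemma sum_add_mod: "(\<Sum>c<k. f ((c + p) mod k)) = (\<Sum>j<k::nat. f j)"
proof -
  have "(\<lambda>c. (c + p) mod k) ` {..<k} = {..<k}"
    by (intro endo_inj_surj inj_on_add_mod) auto
  then show ?thesis
    using sum.reindex[OF inj_on_add_mod, of f p k] by (simp add: comp_def)
qed

lemma output_size_ge_cyclic_window:
  fixes A :: "nat \<Rightarrow> nat \<Rightarrow> 'a::{finite,field}"
    and L :: "nat \<Rightarrow> nat \<Rightarrow> nat \<Rightarrow> 'a"
  assumes hss: "linear_HSS_POLY k d m l \<rho> sd A B b ev L"
    and priv: "HSS_private t k m l \<rho> sd A B" and "d \<le> m" and "0 < t" and "c < k"
  shows "l \<le> (\<Sum>p\<in>{d * t..<k}. b ((c + p) mod k))"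
proof -
  let ?rot = "\<lambda>p. (c + p) mod k"
  have "l \<le> (\<Sum>j\<in>?rot ` {d * t..<k}. b j)"
  proof (rule output_size_ge_of_cover[OF hss priv \<open>d \<le> m\<close>, where T = "\<lambda>i. ?rot ` {i * t..<(i + 1) * t}"])
    fix i
    have "card (?rot ` {i * t..<(i + 1) * t}) \<le> card {i * t..<(i + 1) * t}"
      by (rule card_image_le) simp
    then show "?rot ` {i * t..<(i + 1) * t} \<subseteq> {..<k} \<and> card (?rot ` {i * t..<(i + 1) * t}) \<le> t"
      using \<open>c < k\<close> by auto
  next
    show "?rot ` {d * t..<k} \<subseteq> {..<k}" using \<open>c < k\<close> by auto
  next
    fix j assume "j < k" "j \<notin> ?rot ` {d * t..<k}"
    define p where "p = (j + k - c) mod k"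
    have "?rot p = j"
      using \<open>c < k\<close> \<open>j < k\<close> by (simp add: p_def mod_add_right_eq)
    moreover have "p < k" using \<open>c < k\<close> by (simp add: p_def)
    ultimately have "p < d * t"
      using \<open>j \<notin> ?rot ` {d * t..<k}\<close> by (metis atLeastLessThan_iff image_eqI not_less)
    then have "p div t < d"
      using \<open>0 < t\<close> by (simp add: less_mult_imp_div_less)
    moreover have "p \<in> {p div t * t..<(p div t + 1) * t}"
      using \<open>0 < t\<close> div_times_less_eq_dividend[of p t] dividend_less_div_times[of t p] by simp
    ultimately show "\<exists>i<d. j \<in> ?rot ` {i * t..<(i + 1) * t}"
      using \<open>?rot p = j\<close> by blast
  qed
  also have "\<dots> \<le> (\<Sum>p\<in>{d * t..<k}. b (?rot p))"
    using sum_image_le[of "{d * t..<k}" b ?rot] by (simp add: comp_def)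
  finally show ?thesis .
qed

lemma count_le_of_cyclic_windows:
  fixes b :: "nat \<Rightarrow> nat"
  assumes "\<And>c. c < k \<Longrightarrow> l \<le> (\<Sum>p\<in>{N..<k}. b ((c + p) mod k))"
  shows "k * l \<le> (k - N) * (\<Sum>j<k. b j)"
proof -
  have "k * l \<le> (\<Sum>c<k. \<Sum>p\<in>{N..<k}. b ((c + p) mod k))"
    using sum_mono[of "{..<k}" "\<lambda>_. l"] assms by fastforce
  also have "\<dots> = (\<Sum>p\<in>{N..<k}. \<Sum>c<k. b ((c + p) mod k))" by (rule sum.swap)
  also have "\<dots> = (k - N) * (\<Sum>j<k. b j)" by (simp add: sum_add_mod)
  finally show ?thesis .
qed

lemma download_bounds_of_count:
  fixes b :: "nat \<Rightarrow> nat"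
  assumes "0 < k" "0 < l" and count: "k * l \<le> (k - N) * (\<Sum>j<k. b j)"
  shows "N < k
    \<and> download_cost TYPE('a::{finite,zero_neq_one}) k b \<ge> real k * real l * log 2 (real CARD('a)) / (real k - real N)
    \<and> download_rate TYPE('a) l k b \<le> 1 - real N / real k"
proof -
  define n where "n = (\<Sum>j<k. b j)"
  have "N < k" "0 < n" using count \<open>0 < k\<close> \<open>0 < l\<close> by (auto simp: n_def intro: ccontr)
  then have count_real: "real k * real l \<le> (real k - real N) * real n"
    using count unfolding n_def by (metis of_nat_diff of_nat_le_iff of_nat_mult less_imp_le)
  have "1 < CARD('a)" using card_mono[of UNIV "{0::'a, 1}"] by simp
  then have lg: "0 < log 2 (real CARD('a))" by simp
  have cost: "download_cost TYPE('a) k b = real n * log 2 (real CARD('a))"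
    by (simp add: download_cost_def n_def)
  have "real k * real l * log 2 (real CARD('a)) \<le> (real k - real N) * (real n * log 2 (real CARD('a)))"
    using mult_right_mono[OF count_real less_imp_le[OF lg]] by (simp add: mult.assoc)
  then have "real k * real l * log 2 (real CARD('a)) / (real k - real N) \<le> download_cost TYPE('a) k b"
    using \<open>N < k\<close> by (simp add: cost pos_divide_le_eq mult.commute)
  moreover have "download_rate TYPE('a) l k b = real l / real n"
    using lg by (simp add: download_rate_def cost less_imp_neq[symmetric])
  moreover have "real l / real n \<le> 1 - real N / real k"
    using count_real \<open>0 < n\<close> \<open>0 < k\<close> by (simp add: field_simps)
  ultimately show ?thesis using \<open>N < k\<close> by simp
qed

theorem mainTheorem9:
  fixes A :: "nat \<Rightarrow> nat \<Rightarrow> 'a::{finite,field}"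
    and B :: "nat \<Rightarrow> nat \<Rightarrow> nat \<Rightarrow> 'a"
    and ev :: "(nat \<Rightarrow> (nat \<Rightarrow> nat) \<Rightarrow> 'a) \<Rightarrow> nat \<Rightarrow> (nat \<Rightarrow> nat \<Rightarrow> nat \<Rightarrow> 'a) \<Rightarrow> (nat \<Rightarrow> 'a)"
    and L :: "nat \<Rightarrow> nat \<Rightarrow> nat \<Rightarrow> 'a"
    and t k d m l \<rho> :: nat and sd b :: "nat \<Rightarrow> nat"
  assumes "0 < t" "0 < k" "0 < d" "0 < m" "0 < l" "d \<le> m"
    and "linear_HSS_POLY k d m l \<rho> sd A B b ev L"
    and "HSS_private t k m l \<rho> sd A B"
  shows "d * t < k
    \<and> download_cost TYPE('a) k b \<ge> real k * real l * log 2 (real CARD('a)) / (real k - real (d * t))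
    \<and> download_rate TYPE('a) l k b \<le> 1 - real (d * t) / real k"
proof -
  have "l \<le> (\<Sum>p\<in>{d * t..<k}. b ((c + p) mod k))" if "c < k" for c
    using assms(7,8,6,1) that by (rule output_size_ge_cyclic_window)
  then have "k * l \<le> (k - d * t) * (\<Sum>j<k. b j)"
    by (rule count_le_of_cyclic_windows)
  from download_bounds_of_count[OF assms(2,5) this] show ?thesis .
qed
end
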